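(* Consider the influential bandit problem with $K$ arms, and assume $\max_{i,j}|A_{ij}|\le 1$ and $|\xi^{(t)}|\le1$ for all $t$. Then for every horizon $T\ge K+1$ and every realization of the noise, the Influential LCB algorithm satisfies $$\sum_{t=1}^T l^{(t)}_{i^{(t)}}-\min_{(j_1,\dots,j_T)\in[K]^T}\sum_{t=1}^T l^{(t)}_{j_t}\;\le\;\Big(\tfrac{5K+3}{2}+2\|l^{(1)}\|_\infty\Big)T+\big(2K+2\|l^{(1)}\|_\infty+4\big)\,T\log T,$$ i.e. the regret is $O(KT\log T)$ (natural logarithm).
   Context: Influential bandit problem: there are $K$ arms, an unknown symmetric positive semi-definite interaction matrix $A\in\mathbb{R}^{K\times K}$ and an unknown initial loss vector $l^{(1)}\in\mathbb{R}^K$. At each round $t=1,\dots,T$ the algorithm chooses $i^{(t)}\in[K]$ based on past observations, observes $L^{(t)}=l^{(t)}_{i^{(t)}}+\xi^{(t)}$, and then $l^{(t+1)}_j=l^{(t)}_j+A_{i^{(t)}j}$ for all $j\in[K]$; in the minimum the losses evolve under the same dynamics driven by $j_1,\dots,j_T$. Influential LCB algorithm: initialize $c^{(1)}_i=0$ and $\hat l^{(1)}_i=-\infty$ for all $i\in[K]$. At round $t$, choose $i^{(t)}\in\arg\min_{i\in[K]}(\hat l^{(t)}_i-c^{(t)}_i)$ (any tie-breaking), observe $L^{(t)}$, and set $\hat l^{(t+1)}_{i^{(t)}}=L^{(t)}$, $\hat l^{(t+1)}_i=\hat l^{(t)}_i$ for $i\ne i^{(t)}$; $c^{(t+1)}_{i^{(t)}}=1$,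 $c^{(t+1)}_i=c^{(t)}_i+1$ for $i\ne i^{(t)}$. *)

theory Defs
  imports "HOL-Analysis.Analysis"
begin

text \<open>Arms are the naturals 0,...,K-1. Rounds are numbered 1,2,3,...
  A sequence of pulled arms is a function js :: nat => nat (js t = arm pulled at round t).\<close>

definition sym_psd :: "nat \<Rightarrow> (nat \<Rightarrow> nat \<Rightarrow> real) \<Rightarrow> bool" where
  "sym_psd K A \<longleftrightarrow> (\<forall>i<K. \<forall>j<K. A i j = A j i) \<and>
     (\<forall>x :: nat \<Rightarrow> real. 0 \<le> (\<Sum>i<K. \<Sum>j<K. x i * A i j * x j))"

text \<open>Loss vector at round t (t >= 1) when the arms js 1, js 2, ... are pulled:
  l^(t)_j = l^(1)_j + sum_{s=1}^{t-1} A_{js s, j}, i.e. the closed form of the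
  recursion l^(t+1)_j = l^(t)_j + A_{js t, j}.\<close>
definition loss :: "(nat \<Rightarrow> real) \<Rightarrow> (nat \<Rightarrow> nat \<Rightarrow> real) \<Rightarrow> (nat \<Rightarrow> nat) \<Rightarrow> nat \<Rightarrow> nat \<Rightarrow> real" where
  "loss l1 A js t j = l1 j + (\<Sum>s\<in>{1..<t}. A (js s) j)"

text \<open>State of Influential LCB after k completed rounds, i.e. the values
  hat l^(k+1) and c^(k+1).  ch = chosen arms, L = observations.\<close>
primrec lcb_est :: "(nat \<Rightarrow> nat) \<Rightarrow> (nat \<Rightarrow> real) \<Rightarrow> nat \<Rightarrow> nat \<Rightarrow> ereal" where
  "lcb_est ch L 0 i = -\<infinity>"
| "lcb_est ch L (Suc k) i = (if i = ch (Suc k) then ereal (L (Suc k)) else lcb_est ch L k i)"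

primrec lcb_cnt :: "(nat \<Rightarrow> nat) \<Rightarrow> nat \<Rightarrow> nat \<Rightarrow> real" where
  "lcb_cnt ch 0 i = 0"
| "lcb_cnt ch (Suc k) i = (if i = ch (Suc k) then 1 else lcb_cnt ch k i + 1)"

definition influential_lcb_run ::
  "nat \<Rightarrow> (nat \<Rightarrow> nat \<Rightarrow> real) \<Rightarrow> (nat \<Rightarrow> real) \<Rightarrow> (nat \<Rightarrow> real) \<Rightarrow> nat \<Rightarrow> (nat \<Rightarrow> nat) \<Rightarrow> bool" where
  "influential_lcb_run K A l1 \<xi> T ch \<longleftrightarrow>
     (let L = (\<lambda>t. loss l1 A ch t (ch t) + \<xi> t) in
      \<forall>t\<in>{1..T}. ch t < K \<and>
        (\<forall>i<K. lcb_est ch L (t - 1) (ch t) - ereal (lcb_cnt ch (t - 1) (ch t))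
               \<le> lcb_est ch L (t - 1) i - ereal (lcb_cnt ch (t - 1) i)))"

definition regret ::
  "nat \<Rightarrow> (nat \<Rightarrow> nat \<Rightarrow> real) \<Rightarrow> (nat \<Rightarrow> real) \<Rightarrow> nat \<Rightarrow> (nat \<Rightarrow> nat) \<Rightarrow> real" where
  "regret K A l1 T ch =
     (\<Sum>t=1..T. loss l1 A ch t (ch t))
     - Min ((\<lambda>js. \<Sum>t=1..T. loss l1 A js t (js t)) ` (PiE {1..T} (\<lambda>_. {..<K})))"

definition sup_norm :: "nat \<Rightarrow> (nat \<Rightarrow> real) \<Rightarrow> real" where
  "sup_norm K v = Max ((\<lambda>i. \<bar>v i\<bar>) ` {..<K})"

end

theory Submission
  imports Defs
begin

text \<open>
  Since \<open>A\<close> is symmetric, the cumulative loss of any sequence of pulls depends only on its count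
  vector \<open>N\<close>: it is the potential \<open>W(N) = \<langle>l1, N\<rangle> + (N\<^sup>T A N - \<langle>diag A, N\<rangle>)/2\<close>. Compare the
  algorithm with playing the arms in fixed proportions \<open>y\<close> (the empirical frequencies of an optimal
  sequence) via \<open>e(t) = W(N\<^sub>t) - W(t y)\<close>. In a round \<open>t > K\<close> the LCB rule ensures that the current
  loss of the chosen arm exceeds every arm's loss by at most twice its staleness \<open>t - \<tau>\<close>
  (\<open>\<tau>\<close> its previous pull) plus noise; together with positive semi-definiteness of \<open>A\<close>, which
  absorbs the cross term between \<open>N\<close> and \<open>y\<close>, this gives
  \<open>e(t)/t - e(t-1)/(t-1) \<le> (2\<parallel>l1\<parallel>\<^sub>\<infinity> + 7/2 + 2(t - \<tau>))/t\<close>. Now \<open>1/t \<le> ln t - ln (t-1)\<close> and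
  \<open>(t - \<tau>)/t \<le> ln t - ln \<tau>\<close>, and the latter telescopes in the sum of the logarithms of the
  last pull times of all arms, which is at most \<open>K ln T\<close>. The first \<open>K\<close> rounds pull every arm
  once, since an arm never pulled has index \<open>-\<infinity>\<close>, and cost \<open>O(K\<^sup>2)\<close>.
\<close>

lemma sum_lessThan_of_bool_eq_mult:
  fixes f :: "nat \<Rightarrow> 'a::semiring_1"
  assumes "i < K"
  shows "(\<Sum>k<K. of_bool (i = k) * f k) = f i"
proof -
  have "{..<K} \<inter> {k. i = k} = {i}" using assms by auto
  then show ?thesis by simp
qed

lemma sum_mult_le_bound:
  fixes f w :: "nat \<Rightarrow> real"
  assumes "\<And>i. i < K \<Longrightarrow> 0 \<le> w i" and "\<And>i. i < K \<Longrightarrow> f i \<le> b"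
  shows "(\<Sum>i<K. f i * w i) \<le> b * (\<Sum>i<K. w i)"
proof -
  have "(\<Sum>i<K. f i * w i) \<le> (\<Sum>i<K. b * w i)"
    using assms by (intro sum_mono mult_right_mono) auto
  then show ?thesis by (simp add: sum_distrib_left)
qed

lemma sum_mult_ge_bound:
  fixes f w :: "nat \<Rightarrow> real"
  assumes "\<And>i. i < K \<Longrightarrow> 0 \<le> w i" and "\<And>i. i < K \<Longrightarrow> b \<le> f i"
  shows "b * (\<Sum>i<K. w i) \<le> (\<Sum>i<K. f i * w i)"
  using sum_mult_le_bound[of K w "\<lambda>i. - f i" "- b"] assms by (simp add: sum_negf)

definition quad_form :: "nat \<Rightarrow> (nat \<Rightarrow> nat \<Rightarrow> real) \<Rightarrow> (nat \<Rightarrow> real) \<Rightarrow> real" where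
  "quad_form K A x = (\<Sum>i<K. \<Sum>j<K. x i * A i j * x j)"

text \<open>For symmetric \<open>A\<close>, one more pull of arm \<open>i\<close> raises the potential by exactly the current loss
  of \<open>i\<close> (\<open>potential_add_unit\<close>); the diagonal term compensates the self-interaction in the
  quadratic form.\<close>

definition potential :: "nat \<Rightarrow> (nat \<Rightarrow> nat \<Rightarrow> real) \<Rightarrow> (nat \<Rightarrow> real) \<Rightarrow> (nat \<Rightarrow> real) \<Rightarrow> real" where
  "potential K A l1 x = (\<Sum>i<K. l1 i * x i) + quad_form K A x / 2 - (\<Sum>i<K. A i i * x i) / 2"

lemma quad_form_scale: "quad_form K A (\<lambda>j. c * x j) = c\<^sup>2 * quad_form K A x"
  unfolding quad_form_def by (simp add: sum_distrib_left power2_eq_square mult_ac)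

lemma potential_scale:
  "potential K A l1 (\<lambda>j. c * x j)
     = c * (\<Sum>i<K. l1 i * x i) + c\<^sup>2 * quad_form K A x / 2 - c * (\<Sum>i<K. A i i * x i) / 2"
  unfolding potential_def quad_form_scale by (simp add: sum_distrib_left mult_ac)

lemma quad_form_cross_le:
  assumes sym: "\<forall>i<K. \<forall>j<K. A i j = A j i"
    and psd: "0 \<le> quad_form K A (\<lambda>j. x j - c * y j)"
  shows "2 * c * (\<Sum>i<K. \<Sum>j<K. x i * A i j * y j) \<le> quad_form K A x + c\<^sup>2 * quad_form K A y"
proof -
  have swap: "(\<Sum>i<K. \<Sum>j<K. y i * A i j * x j) = (\<Sum>i<K. \<Sum>j<K. x i * A i j * y j)"
    by (subst sum.swap) (use sym in \<open>auto intro!: sum.cong simp: mult_ac\<close>)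
  have "quad_form K A (\<lambda>j. x j - c * y j) = quad_form K A x - c * (\<Sum>i<K. \<Sum>j<K. x i * A i j * y j)
      - c * (\<Sum>i<K. \<Sum>j<K. y i * A i j * x j) + c\<^sup>2 * quad_form K A y"
    unfolding quad_form_def
    by (simp add: algebra_simps sum.distrib sum_subtractf sum_distrib_left power2_eq_square)
  then show ?thesis using psd swap by simp
qed

lemma quad_form_add:
  assumes sym: "\<forall>i<K. \<forall>j<K. A i j = A j i"
  shows "quad_form K A (\<lambda>j. x j + z j)
           = quad_form K A x + 2 * (\<Sum>i<K. \<Sum>j<K. x i * A i j * z j) + quad_form K A z"
proof -
  have swap: "(\<Sum>i<K. \<Sum>j<K. z i * A i j * x j) = (\<Sum>i<K. \<Sum>j<K. x i * A i j * z j)"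
    by (subst sum.swap) (use sym in \<open>auto intro!: sum.cong simp: mult_ac\<close>)
  have "quad_form K A (\<lambda>j. x j + z j) = quad_form K A x + (\<Sum>i<K. \<Sum>j<K. x i * A i j * z j)
      + (\<Sum>i<K. \<Sum>j<K. z i * A i j * x j) + quad_form K A z"
    unfolding quad_form_def by (simp add: algebra_simps sum.distrib)
  then show ?thesis using swap by simp
qed

lemma potential_add_unit:
  assumes sym: "\<forall>i<K. \<forall>j<K. A i j = A j i" and "i < K"
  shows "potential K A l1 (\<lambda>j. x j + of_bool (i = j))
           = potential K A l1 x + l1 i + (\<Sum>k<K. x k * A k i)"
proof -
  have unit: "(\<Sum>j<K. f j * of_bool (i = j)) = f i" for f :: "nat \<Rightarrow> real"
    using sum_lessThan_of_bool_eq_mult[OF \<open>i < K\<close>, of f] by (simp add: mult.commute)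
  have "quad_form K A (\<lambda>j. of_bool (i = j))
      = (\<Sum>a<K. of_bool (i = a) * (\<Sum>b<K. A a b * of_bool (i = b)))"
    unfolding quad_form_def by (simp only: sum_distrib_left mult.assoc)
  also have "\<dots> = A i i"
    unfolding unit by (rule sum_lessThan_of_bool_eq_mult[OF \<open>i < K\<close>])
  finally have "quad_form K A (\<lambda>j. of_bool (i = j)) = A i i" .
  then have "quad_form K A (\<lambda>j. x j + of_bool (i = j))
      = quad_form K A x + 2 * (\<Sum>k<K. x k * A k i) + A i i"
    using unit by (simp add: quad_form_add[OF sym])
  then show ?thesis
    unfolding potential_def using unit[of l1] unit[of "\<lambda>j. A j j"]
    by (simp add: sum.distrib field_simps)
qed

lemma potential_ge:
  assumes "\<And>j. j < K \<Longrightarrow> A j j \<le> 1" and "\<And>j. j < K \<Longrightarrow> \<bar>l1 j\<bar> \<le> B"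
    and "\<And>j. j < K \<Longrightarrow> 0 \<le> x j"
  shows "quad_form K A x / 2 - (B + 1/2) * (\<Sum>j<K. x j) \<le> potential K A l1 x"
proof -
  have "- B * (\<Sum>j<K. x j) \<le> (\<Sum>j<K. l1 j * x j)"
    using assms by (intro sum_mult_ge_bound) (auto simp: abs_le_iff minus_le_iff)
  moreover have "(\<Sum>j<K. A j j * x j) \<le> 1 * (\<Sum>j<K. x j)"
    using assms by (intro sum_mult_le_bound) auto
  ultimately show ?thesis unfolding potential_def by (simp add: algebra_simps)
qed

text \<open>Divided by \<open>s (s + 1)\<close> this bounds the growth of the normalised gap in one round. The key
  input is the semi-definite bound \<open>2 s \<langle>N, A y\<rangle> \<le> N\<^sup>T A N + s\<^sup>2 y\<^sup>T A y\<close>.\<close>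

lemma potential_step_le:
  fixes N y :: "nat \<Rightarrow> real"
  assumes sym: "\<forall>i<K. \<forall>j<K. A i j = A j i" and psd: "\<And>z. 0 \<le> quad_form K A z"
    and diag: "\<And>j. j < K \<Longrightarrow> A j j \<le> 1" and l1_le: "\<And>j. j < K \<Longrightarrow> \<bar>l1 j\<bar> \<le> B"
    and y_nonneg: "\<And>j. j < K \<Longrightarrow> 0 \<le> y j" and y_sum: "(\<Sum>j<K. y j) = 1"
    and N_nonneg: "\<And>j. j < K \<Longrightarrow> 0 \<le> N j" and N_sum: "(\<Sum>j<K. N j) = s"
    and "i < K"
    and near_average:
      "l1 i + (\<Sum>k<K. N k * A k i) \<le> (\<Sum>j<K. y j * (l1 j + (\<Sum>k<K. N k * A k j))) + E"
  shows "s * (potential K A l1 (\<lambda>j. N j + of_bool (i = j)) - potential K A l1 (\<lambda>j. (s + 1) * y j))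
           \<le> (s + 1) * (potential K A l1 N - potential K A l1 (\<lambda>j. s * y j)) + s * (2 * B + 3/2 + E)"
proof -
  define g where "g j = l1 j + (\<Sum>k<K. N k * A k j)" for j
  define ly where "ly = (\<Sum>j<K. l1 j * y j)"
  define cross where "cross = (\<Sum>a<K. \<Sum>b<K. N a * A a b * y b)"
  have s_nonneg: "0 \<le> s" using N_sum N_nonneg by (metis lessThan_iff sum_nonneg)
  have "(\<Sum>j<K. y j * g j) = ly + (\<Sum>j<K. \<Sum>k<K. N k * A k j * y j)"
    unfolding g_def ly_def by (simp add: distrib_left sum.distrib sum_distrib_left mult_ac)
  also have "(\<Sum>j<K. \<Sum>k<K. N k * A k j * y j) = cross"
    unfolding cross_def by (rule sum.swap)
  finally have "g i \<le> ly + cross + E" using near_average unfolding g_def by simp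
  then have gain: "s * g i \<le> s * ly + s * cross + s * E"
    using s_nonneg by (metis distrib_left mult_left_mono)
  have "ly \<le> B * (\<Sum>j<K. y j)"
    unfolding ly_def using y_nonneg l1_le by (intro sum_mult_le_bound) (auto simp: abs_le_iff)
  then have ly_le: "s * ly \<le> s * B" using s_nonneg y_sum by (simp add: mult_left_mono)
  have cross_le: "2 * (s * cross) \<le> quad_form K A N + s\<^sup>2 * quad_form K A y"
    using quad_form_cross_le[OF sym psd] unfolding cross_def by (simp add: mult.assoc)
  have N_low: "quad_form K A N / 2 - (B + 1/2) * s \<le> potential K A l1 N"
    using potential_ge[of K A l1 B N] diag l1_le N_nonneg N_sum by simp
  have Qy: "0 \<le> s * quad_form K A y" using psd s_nonneg by simp
  have "(s + 1) * (potential K A l1 N - potential K A l1 (\<lambda>j. s * y j)) + s * (2 * B + 3/2 + E)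
        - s * (potential K A l1 (\<lambda>j. N j + of_bool (i = j)) - potential K A l1 (\<lambda>j. (s + 1) * y j))
      = potential K A l1 N + s * (2 * B + 3/2 + E) - s * g i
        + s\<^sup>2 * quad_form K A y / 2 + s * quad_form K A y / 2"
    unfolding potential_add_unit[OF sym \<open>i < K\<close>] potential_scale g_def
    by (simp add: field_simps power2_eq_square)
  then show ?thesis using gain ly_le cross_le N_low Qy s_nonneg by (simp add: algebra_simps)
qed

primrec pull_count :: "(nat \<Rightarrow> nat) \<Rightarrow> nat \<Rightarrow> nat \<Rightarrow> real" where
  "pull_count js 0 i = 0"
| "pull_count js (Suc t) i = pull_count js t i + of_bool (js (Suc t) = i)"

lemma pull_count_nonneg: "0 \<le> pull_count js t i"
  by (induction t) auto

lemma sum_rounds_eq_pull_count: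
  assumes "\<And>s. s \<in> {1..t} \<Longrightarrow> js s < K"
  shows "(\<Sum>s=1..t. f (js s)) = (\<Sum>k<K. pull_count js t k * f k)"
  using assms by (induction t) (auto simp: distrib_right sum.distrib sum_lessThan_of_bool_eq_mult)

lemma sum_pull_count:
  assumes "\<And>s. s \<in> {1..t} \<Longrightarrow> js s < K"
  shows "(\<Sum>k<K. pull_count js t k) = real t"
  using sum_rounds_eq_pull_count[of t js K "\<lambda>_. 1"] assms by simp

lemma loss_eq_pull_count:
  assumes "\<And>s. s \<in> {1..t} \<Longrightarrow> js s < K"
  shows "loss l1 A js (Suc t) j = l1 j + (\<Sum>k<K. pull_count js t k * A k j)"
proof -
  have "{1..<Suc t} = {1..t}" by auto
  then show ?thesis
    unfolding loss_def using sum_rounds_eq_pull_count[of t js K "\<lambda>k. A k j"] assms by simp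
qed

lemma cumulative_loss_eq_potential:
  assumes sym: "\<forall>i<K. \<forall>j<K. A i j = A j i" and "\<And>s. s \<in> {1..t} \<Longrightarrow> js s < K"
  shows "(\<Sum>s=1..t. loss l1 A js s (js s)) = potential K A l1 (pull_count js t)"
  using assms(2)
proof (induction t)
  case 0
  then show ?case by (simp add: potential_def quad_form_def)
next
  case (Suc t)
  then have "js (Suc t) < K" by simp
  have "pull_count js (Suc t) = (\<lambda>j. pull_count js t j + of_bool (js (Suc t) = j))"
    by auto
  then have "potential K A l1 (pull_count js (Suc t))
      = potential K A l1 (pull_count js t) + l1 (js (Suc t))
        + (\<Sum>k<K. pull_count js t k * A k (js (Suc t)))"
    using potential_add_unit[OF sym \<open>js (Suc t) < K\<close>] by presburger
  also have "\<dots> = potential K A l1 (pull_count js t) + loss l1 A js (Suc t) (js (Suc t))"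
    using loss_eq_pull_count[of t js K l1 A "js (Suc t)"] Suc.prems by simp
  finally show ?case using Suc by (simp del: pull_count.simps)
qed

primrec last_pull :: "(nat \<Rightarrow> nat) \<Rightarrow> nat \<Rightarrow> nat \<Rightarrow> nat" where
  "last_pull ch 0 i = 0"
| "last_pull ch (Suc k) i = (if ch (Suc k) = i then Suc k else last_pull ch k i)"

lemma last_pull_le: "last_pull ch k i \<le> k"
  by (induction k) auto

lemma last_pull_pulled: "last_pull ch k i \<noteq> 0 \<Longrightarrow> ch (last_pull ch k i) = i"
  by (induction k) auto

lemma last_pull_eq_0_iff: "last_pull ch k i = 0 \<longleftrightarrow> (\<forall>s\<in>{1..k}. ch s \<noteq> i)"
  by (induction k) (auto simp: atLeastAtMostSuc_conv)

lemma lcb_est_eq_last_pull: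
  "lcb_est ch L k i = (if last_pull ch k i = 0 then -\<infinity> else ereal (L (last_pull ch k i)))"
  by (induction k) auto

lemma lcb_cnt_eq_last_pull:
  "lcb_cnt ch k i = (if last_pull ch k i = 0 then real k else real k + 1 - real (last_pull ch k i))"
  by (induction k) auto

lemma unpulled_arm_exists:
  assumes "k < K"
  shows "\<exists>i<K. last_pull ch k i = 0"
proof (rule ccontr)
  assume all_pulled: "\<not> (\<exists>i<K. last_pull ch k i = 0)"
  have "{..<K} \<subseteq> ch ` {1..k}"
  proof
    fix i assume "i \<in> {..<K}"
    with all_pulled have "last_pull ch k i \<noteq> 0" by auto
    then have "last_pull ch k i \<in> {1..k}" and "ch (last_pull ch k i) = i"
      using last_pull_le last_pull_pulled by auto
    then show "i \<in> ch ` {1..k}" by (metis rev_image_eqI)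
  qed
  then have "card {..<K} \<le> card (ch ` {1..k})" by (intro card_mono) auto
  also have "\<dots> \<le> card {1..k}" by (rule card_image_le) simp
  finally show False using assms by simp
qed

lemma sum_last_pull_Suc:
  fixes f :: "nat \<Rightarrow> real"
  assumes "ch (Suc k) < K"
  shows "(\<Sum>i<K. f (last_pull ch (Suc k) i)) - (\<Sum>i<K. f (last_pull ch k i))
           = f (Suc k) - f (last_pull ch k (ch (Suc k)))"
proof -
  have "(\<Sum>i<K. f (last_pull ch (Suc k) i)) - (\<Sum>i<K. f (last_pull ch k i))
      = (\<Sum>i<K. f (last_pull ch (Suc k) i) - f (last_pull ch k i))"
    by (rule sum_subtractf[symmetric])
  also have "\<dots> = (\<Sum>i<K. if ch (Suc k) = i then f (Suc k) - f (last_pull ch k i) else 0)"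
    by (intro sum.cong) auto
  also have "\<dots> = f (Suc k) - f (last_pull ch k (ch (Suc k)))"
    using assms by simp
  finally show ?thesis .
qed

lemma loss_diff_le:
  assumes "1 \<le> \<tau>" "\<tau> \<le> t" and "\<And>s. s \<in> {\<tau>..<t} \<Longrightarrow> \<bar>A (js s) j\<bar> \<le> 1"
  shows "\<bar>loss l1 A js t j - loss l1 A js \<tau> j\<bar> \<le> real (t - \<tau>)"
proof -
  have "loss l1 A js t j - loss l1 A js \<tau> j = (\<Sum>s\<in>{\<tau>..<t}. A (js s) j)"
    unfolding loss_def using sum.atLeastLessThan_concat[of 1 \<tau> t "\<lambda>s. A (js s) j"] assms(1,2) by simp
  also have "\<bar>\<dots>\<bar> \<le> (\<Sum>s\<in>{\<tau>..<t}. \<bar>A (js s) j\<bar>)" by (rule sum_abs)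
  also have "\<dots> \<le> of_nat (card {\<tau>..<t}) * 1" using assms(3) by (intro sum_bounded_above) auto
  finally show ?thesis by simp
qed

lemma loss_le:
  assumes "\<And>s. s \<in> {1..<t} \<Longrightarrow> A (js s) j \<le> 1" and "l1 j \<le> B"
  shows "loss l1 A js t j \<le> B + real (t - 1)"
proof -
  have "(\<Sum>s\<in>{1..<t}. A (js s) j) \<le> of_nat (card {1..<t}) * 1"
    using assms(1) by (intro sum_bounded_above) auto
  then show ?thesis unfolding loss_def using assms(2) by simp
qed

lemma diff_div_le_ln_diff:
  fixes a b :: real
  assumes "0 < a" "a \<le> b"
  shows "(b - a) / b \<le> ln b - ln a"
proof -
  have "ln (a / b) \<le> a / b - 1" using assms by (intro ln_le_minus_one) simp
  moreover have "ln (a / b) = ln a - ln b" using assms by (simp add: ln_div)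
  moreover have "(b - a) / b = 1 - a / b" using assms by (simp add: field_simps)
  ultimately show ?thesis by linarith
qed

lemma abs_le_sup_norm: "i < K \<Longrightarrow> \<bar>v i\<bar> \<le> sup_norm K v"
  unfolding sup_norm_def by (intro Max_ge) auto

locale influential_lcb_run_setting =
  fixes K T :: nat and A :: "nat \<Rightarrow> nat \<Rightarrow> real" and l1 \<xi> :: "nat \<Rightarrow> real"
    and ch :: "nat \<Rightarrow> nat"
  assumes K_pos: "1 \<le> K"
    and sym_psd: "sym_psd K A"
    and A_bounded: "\<forall>i<K. \<forall>j<K. \<bar>A i j\<bar> \<le> 1"
    and noise_bounded: "\<forall>t. \<bar>\<xi> t\<bar> \<le> 1"
    and K_le_T: "K \<le> T"
    and run: "influential_lcb_run K A l1 \<xi> T ch"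
begin

definition obs :: "nat \<Rightarrow> real" where
  "obs t = loss l1 A ch t (ch t) + \<xi> t"

lemma sym: "\<forall>i<K. \<forall>j<K. A i j = A j i"
  using sym_psd unfolding sym_psd_def by blast

lemma psd: "0 \<le> quad_form K A x"
  using sym_psd unfolding sym_psd_def quad_form_def by blast

lemma A_le_1: "i < K \<Longrightarrow> j < K \<Longrightarrow> A i j \<le> 1"
  using A_bounded abs_le_D1 by blast

lemma arm_lt: "t \<in> {1..T} \<Longrightarrow> ch t < K"
  using run unfolding influential_lcb_run_def Let_def by blast

lemma chosen_index_le:
  "t \<in> {1..T} \<Longrightarrow> i < K \<Longrightarrow>
     lcb_est ch obs (t - 1) (ch t) - ereal (lcb_cnt ch (t - 1) (ch t))
       \<le> lcb_est ch obs (t - 1) i - ereal (lcb_cnt ch (t - 1) i)"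
  using run unfolding influential_lcb_run_def Let_def obs_def[abs_def] by blast

lemma fresh_arm_in_first_rounds:
  assumes "1 \<le> t" "t \<le> K"
  shows "last_pull ch (t - 1) (ch t) = 0"
proof -
  have "t - 1 < K" using assms by linarith
  then obtain i where "i < K" and "last_pull ch (t - 1) i = 0"
    using unpulled_arm_exists by blast
  then have "lcb_est ch obs (t - 1) (ch t) - ereal (lcb_cnt ch (t - 1) (ch t)) \<le> -\<infinity>"
    using chosen_index_le[of t i] assms K_le_T by (simp add: lcb_est_eq_last_pull)
  then show ?thesis by (auto simp: lcb_est_eq_last_pull split: if_splits)
qed

lemma all_arms_pulled:
  assumes "K \<le> k" "i < K"
  shows "last_pull ch k i \<noteq> 0"
proof -
  have "inj_on ch {1..K}"
  proof (rule linorder_inj_onI')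
    fix a b assume "a \<in> {1..K}" "b \<in> {1..K}" "a < b"
    then have "last_pull ch (b - 1) (ch b) = 0" and "a \<in> {1..b - 1}"
      using fresh_arm_in_first_rounds[of b] by simp_all
    then show "ch a \<noteq> ch b" unfolding last_pull_eq_0_iff by blast
  qed
  then have "card (ch ` {1..K}) = card {..<K}" by (simp add: card_image)
  moreover have "ch ` {1..K} \<subseteq> {..<K}" using arm_lt K_le_T by auto
  ultimately have "ch ` {1..K} = {..<K}" by (intro card_subset_eq) simp_all
  then obtain s where "s \<in> {1..K}" "ch s = i" using assms(2) by (metis imageE lessThan_iff)
  then show ?thesis unfolding last_pull_eq_0_iff using assms(1) by auto
qed

lemma lcb_index_after_first_rounds:
  assumes "K \<le> k" "i < K"
  shows "lcb_est ch obs k i - ereal (lcb_cnt ch k i)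
           = ereal (obs (last_pull ch k i) - (real (Suc k) - real (last_pull ch k i)))"
  using all_arms_pulled[OF assms] by (simp add: lcb_est_eq_last_pull lcb_cnt_eq_last_pull)

lemma obs_close:
  assumes "K \<le> s" "s < T" "j < K"
  shows "\<bar>loss l1 A ch (Suc s) j - obs (last_pull ch s j)\<bar>
           \<le> real (Suc s) - real (last_pull ch s j) + 1"
proof -
  define \<tau> where "\<tau> = last_pull ch s j"
  have "1 \<le> \<tau>" "\<tau> \<le> s" "ch \<tau> = j"
    using all_arms_pulled[of s j] last_pull_le[of ch s j] last_pull_pulled[of ch s j] assms
    unfolding \<tau>_def by auto
  have "\<bar>loss l1 A ch (Suc s) j - loss l1 A ch \<tau> j\<bar> \<le> real (Suc s - \<tau>)"
  proof (rule loss_diff_le)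
    fix u assume "u \<in> {\<tau>..<Suc s}"
    then have "ch u < K" using arm_lt \<open>1 \<le> \<tau>\<close> \<open>s < T\<close> by auto
    then show "\<bar>A (ch u) j\<bar> \<le> 1" using A_bounded \<open>j < K\<close> by blast
  qed (use \<open>1 \<le> \<tau>\<close> \<open>\<tau> \<le> s\<close> in auto)
  moreover have "\<bar>\<xi> \<tau>\<bar> \<le> 1" using noise_bounded by blast
  ultimately show ?thesis
    using \<open>\<tau> \<le> s\<close> \<open>ch \<tau> = j\<close> unfolding \<tau>_def[symmetric] obs_def by (simp add: of_nat_diff abs_le_iff)
qed

text \<open>By \<open>obs_close\<close> the index of every arm lies between its current loss minus twice its
  staleness minus 1 and its current loss plus 1.\<close>

lemma chosen_loss_le:
  assumes "K \<le> s" "s < T" "j < K"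
  shows "loss l1 A ch (Suc s) (ch (Suc s))
           \<le> loss l1 A ch (Suc s) j + 2 * (real (Suc s) - real (last_pull ch s (ch (Suc s)))) + 2"
proof -
  have "ch (Suc s) < K" using arm_lt assms by simp
  have "obs (last_pull ch s (ch (Suc s))) - (real (Suc s) - real (last_pull ch s (ch (Suc s))))
      \<le> obs (last_pull ch s j) - (real (Suc s) - real (last_pull ch s j))"
    using chosen_index_le[of "Suc s" j] assms \<open>ch (Suc s) < K\<close>
    by (simp add: lcb_index_after_first_rounds)
  then show ?thesis
    using obs_close[OF assms(1,2) \<open>ch (Suc s) < K\<close>] obs_close[OF assms] by (simp add: abs_le_iff)
qed

text \<open>Regret against playing arm \<open>j\<close> a fraction \<open>y j\<close> of the rounds; for the empirical frequencies
  of an optimal sequence it is the regret at \<open>t = T\<close>.\<close>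

definition regret_gap :: "(nat \<Rightarrow> real) \<Rightarrow> nat \<Rightarrow> real" where
  "regret_gap y t = potential K A l1 (pull_count ch t) - potential K A l1 (\<lambda>j. real t * y j)"

text \<open>Its increment in round \<open>t\<close> is \<open>ln t - ln \<tau>\<close>, which dominates the staleness penalty
  \<open>(t - \<tau>)/t\<close> of the arm pulled in that round.\<close>

definition log_pull_times :: "nat \<Rightarrow> real" where
  "log_pull_times t = (\<Sum>i<K. ln (real (last_pull ch t i)))"

lemma regret_gap_step:
  assumes y_nonneg: "\<And>j. j < K \<Longrightarrow> 0 \<le> y j" and y_sum: "(\<Sum>j<K. y j) = 1"
    and "K \<le> s" "s < T"
  shows "real s * regret_gap y (Suc s)
           \<le> real (Suc s) * regret_gap y s
             + real s * (2 * sup_norm K l1 + 7/2 + 2 * (real (Suc s) - real (last_pull ch s (ch (Suc s)))))"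
proof -
  define i where "i = ch (Suc s)"
  define E where "E = 2 * (real (Suc s) - real (last_pull ch s i)) + 2"
  have "i < K" unfolding i_def using arm_lt assms by simp
  have played: "\<And>u. u \<in> {1..s} \<Longrightarrow> ch u < K" using arm_lt assms by simp
  define g where "g j = l1 j + (\<Sum>k<K. pull_count ch s k * A k j)" for j
  have g_loss: "g j = loss l1 A ch (Suc s) j" for j
    unfolding g_def using loss_eq_pull_count[of s ch K, OF played] by simp
  have "g i - E \<le> g j" if "j < K" for j
    using chosen_loss_le[OF \<open>K \<le> s\<close> \<open>s < T\<close> that] unfolding g_loss i_def E_def by simp
  then have "(g i - E) * (\<Sum>j<K. y j) \<le> (\<Sum>j<K. g j * y j)"
    using y_nonneg by (intro sum_mult_ge_bound) auto
  then have near_average: "g i \<le> (\<Sum>j<K. y j * g j) + E"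
    using y_sum by (simp add: mult.commute)
  have "real s * (potential K A l1 (\<lambda>j. pull_count ch s j + of_bool (i = j))
          - potential K A l1 (\<lambda>j. (real s + 1) * y j))
      \<le> (real s + 1) * (potential K A l1 (pull_count ch s) - potential K A l1 (\<lambda>j. real s * y j))
        + real s * (2 * sup_norm K l1 + 3/2 + E)"
    using near_average unfolding g_def
    by (intro potential_step_le[OF sym psd _ abs_le_sup_norm y_nonneg y_sum pull_count_nonneg
          sum_pull_count[OF played] \<open>i < K\<close>])
      (simp_all add: A_le_1)
  moreover have "pull_count ch (Suc s) = (\<lambda>j. pull_count ch s j + of_bool (i = j))"
    unfolding i_def by auto
  ultimately show ?thesis
    unfolding regret_gap_def E_def i_def by (simp add: algebra_simps)
qed

lemma normalized_regret_gap_step: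
  assumes "\<And>j. j < K \<Longrightarrow> 0 \<le> y j" and "(\<Sum>j<K. y j) = 1" and "K \<le> s" "s < T"
  shows "regret_gap y (Suc s) / real (Suc s) - regret_gap y s / real s
           \<le> (2 * sup_norm K l1 + 7/2) * (ln (real (Suc s)) - ln (real s))
             + 2 * (log_pull_times (Suc s) - log_pull_times s)"
proof -
  define C where "C = 2 * sup_norm K l1 + 7/2"
  define \<tau> where "\<tau> = last_pull ch s (ch (Suc s))"
  define c where "c = C + 2 * (real (Suc s) - real \<tau>)"
  have "0 < s" using K_pos \<open>K \<le> s\<close> by simp
  have "ch (Suc s) < K" using arm_lt assms by simp
  then have "1 \<le> \<tau>" "\<tau> \<le> s"
    using all_arms_pulled[OF \<open>K \<le> s\<close>] last_pull_le unfolding \<tau>_def by (auto simp: Suc_le_eq)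
  have "C \<ge> 0" unfolding C_def using abs_le_sup_norm[of 0 K l1] K_pos by simp
  have "regret_gap y (Suc s) / real (Suc s) - regret_gap y s / real s
      = (real s * regret_gap y (Suc s) - real (Suc s) * regret_gap y s) / (real s * real (Suc s))"
    using \<open>0 < s\<close> by (simp add: field_simps)
  also have "\<dots> \<le> real s * c / (real s * real (Suc s))"
    using regret_gap_step[OF assms] unfolding c_def C_def \<tau>_def by (intro divide_right_mono) auto
  also have "\<dots> = c / real (Suc s)" using \<open>0 < s\<close> by simp
  also have "\<dots> = C * (1 / real (Suc s)) + 2 * ((real (Suc s) - real \<tau>) / real (Suc s))"
    unfolding c_def by (simp add: add_divide_distrib)
  also have "\<dots> \<le> C * (ln (real (Suc s)) - ln (real s)) + 2 * (ln (real (Suc s)) - ln (real \<tau>))"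
    using diff_div_le_ln_diff[of "real s" "real (Suc s)"] diff_div_le_ln_diff[of "real \<tau>" "real (Suc s)"]
      \<open>0 < s\<close> \<open>1 \<le> \<tau>\<close> \<open>\<tau> \<le> s\<close> \<open>C \<ge> 0\<close>
    by (intro add_mono mult_left_mono) auto
  also have "ln (real (Suc s)) - ln (real \<tau>) = log_pull_times (Suc s) - log_pull_times s"
    unfolding log_pull_times_def \<tau>_def
    using sum_last_pull_Suc[where f = "\<lambda>k. ln (real k)" and ch = ch and k = s and K = K]
      \<open>ch (Suc s) < K\<close> by simp
  finally show ?thesis unfolding C_def .
qed

lemma regret_gap_first_rounds:
  assumes y_nonneg: "\<And>j. j < K \<Longrightarrow> 0 \<le> y j" and y_sum: "(\<Sum>j<K. y j) = 1"
  shows "regret_gap y K \<le> real K * (2 * sup_norm K l1 + real K - 1/2)"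
proof -
  have played: "\<And>t. t \<in> {1..K} \<Longrightarrow> ch t < K" using arm_lt K_le_T by auto
  have "potential K A l1 (pull_count ch K) = (\<Sum>t=1..K. loss l1 A ch t (ch t))"
    using cumulative_loss_eq_potential[OF sym played] by simp
  also have "\<dots> \<le> of_nat (card {1..K}) * (sup_norm K l1 + (real K - 1))"
  proof (rule sum_bounded_above)
    fix t assume "t \<in> {1..K}"
    then have "loss l1 A ch t (ch t) \<le> sup_norm K l1 + real (t - 1)"
      using played A_le_1 abs_le_sup_norm[of "ch t" K l1]
      by (intro loss_le) (auto simp: abs_le_iff)
    also have "real (t - 1) \<le> real K - 1" using \<open>t \<in> {1..K}\<close> by (simp add: of_nat_diff)
    finally show "loss l1 A ch t (ch t) \<le> sup_norm K l1 + (real K - 1)" by simp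
  qed
  finally have upper: "potential K A l1 (pull_count ch K) \<le> real K * (sup_norm K l1 + (real K - 1))"
    by simp
  have "quad_form K A (\<lambda>j. real K * y j) / 2 - (sup_norm K l1 + 1/2) * (\<Sum>j<K. real K * y j)
      \<le> potential K A l1 (\<lambda>j. real K * y j)"
    using A_le_1 abs_le_sup_norm y_nonneg by (intro potential_ge) auto
  moreover have "(\<Sum>j<K. real K * y j) = real K" using y_sum by (simp flip: sum_distrib_left)
  ultimately have lower: "- real K * (sup_norm K l1 + 1/2) \<le> potential K A l1 (\<lambda>j. real K * y j)"
    using psd[of "\<lambda>j. real K * y j"] by (simp add: algebra_simps)
  show ?thesis using upper lower unfolding regret_gap_def by (simp add: algebra_simps)
qed

lemma log_pull_times_le: "log_pull_times T \<le> real K * ln (real T)"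
proof -
  have "log_pull_times T \<le> of_nat (card {..<K}) * ln (real T)"
    unfolding log_pull_times_def
  proof (rule sum_bounded_above)
    fix i assume "i \<in> {..<K}"
    then have "last_pull ch T i \<noteq> 0" using all_arms_pulled K_le_T by auto
    then show "ln (real (last_pull ch T i)) \<le> ln (real T)" using last_pull_le[of ch T i] by simp
  qed
  then show ?thesis by simp
qed

lemma log_pull_times_nonneg: "0 \<le> log_pull_times K"
  unfolding log_pull_times_def
proof (rule sum_nonneg)
  fix i assume "i \<in> {..<K}"
  then have "last_pull ch K i \<noteq> 0" using all_arms_pulled by auto
  then show "0 \<le> ln (real (last_pull ch K i))" by simp
qed

lemma normalized_regret_gap_telescope:
  assumes "\<And>j. j < K \<Longrightarrow> 0 \<le> y j" and "(\<Sum>j<K. y j) = 1"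
  shows "regret_gap y T / real T - regret_gap y K / real K
           \<le> (2 * sup_norm K l1 + 7/2) * (ln (real T) - ln (real K))
             + 2 * (log_pull_times T - log_pull_times K)"
proof -
  define f where "f s = regret_gap y s / real s - (2 * sup_norm K l1 + 7/2) * ln (real s)
                        - 2 * log_pull_times s" for s
  have "f T - f K = (\<Sum>s = K..<T. f (Suc s) - f s)" using K_le_T by (simp add: sum_Suc_diff')
  also have "\<dots> \<le> 0"
    using normalized_regret_gap_step[OF assms] unfolding f_def
    by (intro sum_nonpos) (auto simp: algebra_simps)
  finally show ?thesis unfolding f_def by (simp add: algebra_simps) argo
qed

lemma regret_gap_le:
  assumes "\<And>j. j < K \<Longrightarrow> 0 \<le> y j" and "(\<Sum>j<K. y j) = 1"
  shows "regret_gap y T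
           \<le> real T * (2 * sup_norm K l1 + real K - 1/2
                        + (2 * sup_norm K l1 + 7/2 + 2 * real K) * ln (real T))"
proof -
  define C where "C = 2 * sup_norm K l1 + 7/2"
  have "regret_gap y T / real T
      \<le> regret_gap y K / real K + C * ln (real T) - C * ln (real K)
        + 2 * log_pull_times T - 2 * log_pull_times K"
    using normalized_regret_gap_telescope[OF assms] unfolding C_def by (simp add: algebra_simps) argo
  moreover have "regret_gap y K / real K \<le> 2 * sup_norm K l1 + real K - 1/2"
    using regret_gap_first_rounds[OF assms] K_pos
    by (simp add: pos_divide_le_eq mult.commute[of "real K"])
  moreover have "0 \<le> C * ln (real K)"
    using K_pos abs_le_sup_norm[of 0 K l1] unfolding C_def by simp
  ultimately have "regret_gap y T / real T
      \<le> 2 * sup_norm K l1 + real K - 1/2 + C * ln (real T) + 2 * (real K * ln (real T))"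
    using log_pull_times_le log_pull_times_nonneg by argo
  moreover have "0 < real T" using K_pos K_le_T by simp
  ultimately have "regret_gap y T
      \<le> (2 * sup_norm K l1 + real K - 1/2 + C * ln (real T) + 2 * (real K * ln (real T))) * real T"
    by (simp only: pos_divide_le_eq)
  also have "\<dots> = real T * (2 * sup_norm K l1 + real K - 1/2
                        + (2 * sup_norm K l1 + 7/2 + 2 * real K) * ln (real T))"
    unfolding C_def by (simp add: algebra_simps)
  finally show ?thesis .
qed

lemma regret_le:
  "regret K A l1 T ch
     \<le> real T * (2 * sup_norm K l1 + real K - 1/2
                  + (2 * sup_norm K l1 + 7/2 + 2 * real K) * ln (real T))"
proof -
  let ?S = "(\<lambda>js. \<Sum>t=1..T. loss l1 A js t (js t)) ` (PiE {1..T} (\<lambda>_. {..<K}))"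
  have "finite ?S" by (intro finite_imageI finite_PiE) auto
  moreover have "?S \<noteq> {}" using K_pos by (simp add: PiE_eq_empty_iff lessThan_empty_iff)
  ultimately have "Min ?S \<in> ?S" by (rule Min_in)
  then obtain js where js: "js \<in> PiE {1..T} (\<lambda>_. {..<K})"
    and opt: "Min ?S = (\<Sum>t=1..T. loss l1 A js t (js t))"
    by blast
  have js_played: "\<And>t. t \<in> {1..T} \<Longrightarrow> js t < K" using js by (auto simp: PiE_iff)
  define y where "y j = pull_count js T j / real T" for j
  have "0 < T" using K_pos K_le_T by simp
  have y_nonneg: "0 \<le> y j" for j unfolding y_def using pull_count_nonneg by simp
  have y_sum: "(\<Sum>j<K. y j) = 1"
    unfolding y_def using sum_pull_count[OF js_played] \<open>0 < T\<close> by (simp flip: sum_divide_distrib)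
  have "(\<lambda>j. real T * y j) = pull_count js T" using \<open>0 < T\<close> unfolding y_def by auto
  moreover have "(\<Sum>t=1..T. loss l1 A ch t (ch t)) = potential K A l1 (pull_count ch T)"
    by (rule cumulative_loss_eq_potential[OF sym arm_lt])
  moreover have "(\<Sum>t=1..T. loss l1 A js t (js t)) = potential K A l1 (pull_count js T)"
    by (rule cumulative_loss_eq_potential[OF sym js_played])
  ultimately have "regret K A l1 T ch = regret_gap y T"
    unfolding regret_def opt regret_gap_def by simp
  then show ?thesis using regret_gap_le[OF y_nonneg y_sum] by simp
qed

end

theorem theorem4:
  fixes K T :: nat and A :: "nat \<Rightarrow> nat \<Rightarrow> real" and l1 \<xi> :: "nat \<Rightarrow> real"
    and ch :: "nat \<Rightarrow> nat"
  assumes "K \<ge> 1"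
    and "sym_psd K A"
    and "\<forall>i<K. \<forall>j<K. \<bar>A i j\<bar> \<le> 1"
    and "\<forall>t. \<bar>\<xi> t\<bar> \<le> 1"
    and "T \<ge> K + 1"
    and "influential_lcb_run K A l1 \<xi> T ch"
  shows "regret K A l1 T ch
           \<le> ((5 * real K + 3) / 2 + 2 * sup_norm K l1) * real T
             + (2 * real K + 2 * sup_norm K l1 + 4) * real T * ln (real T)"
proof -
  interpret influential_lcb_run_setting K T A l1 \<xi> ch
    using assms by unfold_locales auto
  have "0 \<le> real T * ((3 * real K + 4) / 2 + ln (real T) / 2)" using assms(5) by simp
  moreover have "((5 * real K + 3) / 2 + 2 * sup_norm K l1) * real T
        + (2 * real K + 2 * sup_norm K l1 + 4) * real T * ln (real T)
      - real T * (2 * sup_norm K l1 + real K - 1/2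
                  + (2 * sup_norm K l1 + 7/2 + 2 * real K) * ln (real T))
      = real T * ((3 * real K + 4) / 2 + ln (real T) / 2)"
    by (simp add: field_simps)
  ultimately show ?thesis using regret_le by linarith
qed

end
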